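(* Let $f\colon E\to B$ be a uniformly expansive, homogeneous map of metric spaces. Assume that $B$ has straight finite decomposition complexity and that there exists $b_0\in B$ such that for each $r>0$ the space $f^{-1}(B_r(b_0))$ has straight finite decomposition complexity. Then $E$ has straight finite decomposition complexity. In particular, straight finite decomposition complexity satisfies the Homogeneous Fibering Theorem: if $f\colon E\to B$ is uniformly expansive and homogeneous, $B$ has sFDC, and $f^{-1}(D)$ has sFDC for every bounded $D\subset B$, then $E$ has sFDC.
   Context: $B_r(b_0)$ is the ball of radius $r$ about $b_0$. A map $f\colon X\to Y$ is uniformly expansive if there is a nondecreasing $\rho\colon[0,\infty)\to[0,\infty)$ with $d_Y(f(x),f(x'))\le\rho(d_X(x,x'))$ for all $x,x'$. It is homogeneous if for all $y_1,y_2\in f(X)$ there exist isometries $\phi\colon X\to X$, $\bar\phi\colon Y\to Y$ with $f\circ\phi=\bar\phi\circ f$ and $\bar\phi(y_1)=y_2$. A metric family is a set of metric spaces; it is uniformly bounded if the diameters of its members are uniformly bounded. An $r$-decomposition of a metric space $Z$ over a metric family $\mathcal{Y}$ is a decomposition $Z=Z_0\cup Z_1$ with each $Z_i=\bigsqcup_j Z_{ij}$ a union of pairwise $r$-disjoint subsets ($d(Z_{ij},Z_{ij'})>r$ for $j\neq j'$) and each $Z_{ij}\in\mathcal{Y}$; a family is $r$-decomposable over $\mathcal{Y}$ if each member admits an $r$-decomposition over $\mathcal{Y}$. A metric family $\mathcal{X}$ has straight finite decomposition complexity (sFDC) if for every sequence $R_1<R_2<\cdots$ of positive numbers there exist $n\in\mathbb{N}$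 and families $\mathcal{X}_0=\mathcal{X},\dots,\mathcal{X}_n$ with $\mathcal{X}_i$ $R_{i+1}$-decomposable over $\mathcal{X}_{i+1}$ for $i<n$ and $\mathcal{X}_n$ uniformly bounded. A metric space has sFDC if the family consisting of it alone does. *)

theory Defs
  imports "HOL-Analysis.Analysis"
begin

text \<open>Metric spaces are modelled as subsets of an ambient type of class metric_space,
  with the restricted metric. A metric family is a set of such subsets.\<close>

definition r_disjoint :: "real \<Rightarrow> 'a::metric_space set \<Rightarrow> 'a set \<Rightarrow> bool" where
  "r_disjoint r A C \<longleftrightarrow> (\<exists>s>r. \<forall>x\<in>A. \<forall>y\<in>C. s \<le> dist x y)"

definition r_disjoint_family :: "real \<Rightarrow> 'a::metric_space set set \<Rightarrow> bool" where
  "r_disjoint_family r \<Z> \<longleftrightarrow> (\<forall>A\<in>\<Z>. \<forall>C\<in>\<Z>. A \<noteq> C \<longrightarrow> r_disjoint r A C)"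

definition r_decomposition :: "real \<Rightarrow> 'a::metric_space set \<Rightarrow> 'a set set \<Rightarrow> 'a set set \<Rightarrow> 'a set set \<Rightarrow> bool" where
  "r_decomposition r Z \<Y> \<Z>0 \<Z>1 \<longleftrightarrow>
     Z = \<Union>\<Z>0 \<union> \<Union>\<Z>1 \<and> r_disjoint_family r \<Z>0 \<and> r_disjoint_family r \<Z>1 \<and>
     \<Z>0 \<subseteq> \<Y> \<and> \<Z>1 \<subseteq> \<Y>"

definition r_decomposable :: "real \<Rightarrow> 'a::metric_space set set \<Rightarrow> 'a set set \<Rightarrow> bool" where
  "r_decomposable r \<X> \<Y> \<longleftrightarrow> (\<forall>Z\<in>\<X>. \<exists>\<Z>0 \<Z>1. r_decomposition r Z \<Y> \<Z>0 \<Z>1)"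

definition uniformly_bounded :: "'a::metric_space set set \<Rightarrow> bool" where
  "uniformly_bounded \<X> \<longleftrightarrow> (\<exists>C. \<forall>Z\<in>\<X>. \<forall>x\<in>Z. \<forall>y\<in>Z. dist x y \<le> C)"

text \<open>Straight finite decomposition complexity; the sequence R_1 < R_2 < ... is indexed
  from 0 here, and family Xs i is (R i)-decomposable over Xs (i+1).\<close>
definition sFDC :: "'a::metric_space set set \<Rightarrow> bool" where
  "sFDC \<X> \<longleftrightarrow> (\<forall>R::nat \<Rightarrow> real. (\<forall>i. 0 < R i) \<and> strict_mono R \<longrightarrow>
     (\<exists>n Xs. Xs 0 = \<X> \<and> (\<forall>i<n. r_decomposable (R i) (Xs i) (Xs (Suc i))) \<and>
        uniformly_bounded (Xs n)))"

definition sFDC_space :: "'a::metric_space set \<Rightarrow> bool" where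
  "sFDC_space X \<longleftrightarrow> sFDC {X}"

definition uniformly_expansive :: "('a::metric_space \<Rightarrow> 'b::metric_space) \<Rightarrow> 'a set \<Rightarrow> bool" where
  "uniformly_expansive f X \<longleftrightarrow> (\<exists>\<rho>::real \<Rightarrow> real. mono_on {0..} \<rho> \<and> (\<forall>t\<ge>0. 0 \<le> \<rho> t) \<and>
     (\<forall>x\<in>X. \<forall>x'\<in>X. dist (f x) (f x') \<le> \<rho> (dist x x')))"

definition self_isometry :: "'a::metric_space set \<Rightarrow> ('a \<Rightarrow> 'a) \<Rightarrow> bool" where
  "self_isometry S \<phi> \<longleftrightarrow> bij_betw \<phi> S S \<and> (\<forall>x\<in>S. \<forall>y\<in>S. dist (\<phi> x) (\<phi> y) = dist x y)"

definition homogeneous :: "('a::metric_space \<Rightarrow> 'b::metric_space) \<Rightarrow> 'a set \<Rightarrow> 'b set \<Rightarrow> bool" where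
  "homogeneous f X Y \<longleftrightarrow> (\<forall>y1\<in>f ` X. \<forall>y2\<in>f ` X. \<exists>\<phi> \<psi>.
     self_isometry X \<phi> \<and> self_isometry Y \<psi> \<and> (\<forall>x\<in>X. f (\<phi> x) = \<psi> (f x)) \<and> \<psi> y1 = y2)"

end

theory Submission
  imports Defs
begin

text \<open>Pulled back along \<open>f\<close>, an \<open>S\<close>-disjoint family of subsets of \<open>B\<close> becomes
  \<open>R\<close>-disjoint as soon as \<open>S\<close> dominates the expansion function at scale \<open>R + 1\<close>. Hence the
  finitely many decomposition steps available for \<open>B\<close> lift to \<open>E\<close> and end at the preimages of
  a uniformly bounded family. By homogeneity each of these preimages lies in an isometric copy of
  the preimage of a single ball about \<open>b\<^sub>0\<close>, and isometric copies of the members of a family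
  with sFDC decompose along the same chain; this supplies the remaining steps.\<close>

definition dist_preserving_on :: "('a::metric_space \<Rightarrow> 'a) \<Rightarrow> 'a set \<Rightarrow> bool" where
  "dist_preserving_on g W \<longleftrightarrow> (\<forall>x\<in>W. \<forall>y\<in>W. dist (g x) (g y) = dist x y)"

definition isometric_subcopies :: "'a::metric_space set set \<Rightarrow> 'a set set" where
  "isometric_subcopies \<X> = {T. \<exists>W\<in>\<X>. \<exists>g. dist_preserving_on g W \<and> T \<subseteq> g ` W}"

definition preimage_family :: "('a \<Rightarrow> 'b) \<Rightarrow> 'a set \<Rightarrow> 'b set set \<Rightarrow> 'a set set" where
  "preimage_family f E \<U> = (\<lambda>U. {x\<in>E. f x \<in> U}) ` \<U>"

lemma dist_preserving_on_subset:
  "dist_preserving_on g W \<Longrightarrow> V \<subseteq> W \<Longrightarrow> dist_preserving_on g V"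
  unfolding dist_preserving_on_def by blast

lemma r_decomposable_subfamily:
  "r_decomposable r \<X> \<Y> \<Longrightarrow> \<X>' \<subseteq> \<X> \<Longrightarrow> r_decomposable r \<X>' \<Y>"
  unfolding r_decomposable_def by blast

lemma uniformly_bounded_subfamily:
  "uniformly_bounded \<X> \<Longrightarrow> \<X>' \<subseteq> \<X> \<Longrightarrow> uniformly_bounded \<X>'"
  unfolding uniformly_bounded_def by blast

lemma sFDC_subfamily:
  assumes "sFDC \<X>" and "\<X>' \<subseteq> \<X>"
  shows "sFDC \<X>'"
  unfolding sFDC_def
proof (intro allI impI)
  fix R :: "nat \<Rightarrow> real" assume "(\<forall>i. 0 < R i) \<and> strict_mono R"
  with assms(1) obtain n Xs where Xs: "Xs 0 = \<X>" "\<forall>i<n. r_decomposable (R i) (Xs i) (Xs (Suc i))"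
    "uniformly_bounded (Xs n)" unfolding sFDC_def by blast
  define Xs' where "Xs' = Xs(0 := \<X>')"
  have "r_decomposable (R i) (Xs' i) (Xs' (Suc i))" if "i < n" for i
  proof (cases i)
    case 0
    with that Xs(2) have "r_decomposable (R 0) (Xs 0) (Xs 1)" by simp
    then show ?thesis
      using 0 Xs(1) assms(2) r_decomposable_subfamily by (simp add: Xs'_def)
  next
    case (Suc j)
    then show ?thesis using Xs(2) that by (simp add: Xs'_def)
  qed
  moreover have "uniformly_bounded (Xs' n)"
    using Xs(1,3) assms(2) uniformly_bounded_subfamily
    by (metis Xs'_def fun_upd_apply)
  ultimately show "\<exists>n Xs. Xs 0 = \<X>' \<and> (\<forall>i<n. r_decomposable (R i) (Xs i) (Xs (Suc i))) \<and>
      uniformly_bounded (Xs n)"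
    by (intro exI[of _ n] exI[of _ Xs']) (simp add: Xs'_def)
qed

lemma sFDC_empty: "sFDC {{}}"
  unfolding sFDC_def
  by (intro allI impI exI[of _ 0] exI[of _ "\<lambda>_. {{}}"]) (auto simp: uniformly_bounded_def)

lemma r_disjoint_image:
  assumes "r_disjoint r V V'" and "dist_preserving_on g W" and "V \<subseteq> W" "V' \<subseteq> W"
  shows "r_disjoint r (T \<inter> g ` V) (T' \<inter> g ` V')"
proof -
  from assms(1) obtain s where "s > r" and s: "\<forall>x\<in>V. \<forall>y\<in>V'. s \<le> dist x y"
    unfolding r_disjoint_def by blast
  have "\<forall>a\<in>g ` V. \<forall>b\<in>g ` V'. s \<le> dist a b"
    using s assms(2-4) unfolding dist_preserving_on_def by fastforce
  with \<open>s > r\<close> show ?thesis unfolding r_disjoint_def by blast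
qed

lemma r_decomposable_isometric_subcopies:
  assumes "r_decomposable r \<X> \<Y>"
  shows "r_decomposable r (isometric_subcopies \<X>) (isometric_subcopies \<Y>)"
  unfolding r_decomposable_def
proof
  fix T assume "T \<in> isometric_subcopies \<X>"
  then obtain W g where "W \<in> \<X>" and g: "dist_preserving_on g W" and T: "T \<subseteq> g ` W"
    unfolding isometric_subcopies_def by blast
  with assms obtain \<Z>0 \<Z>1 where "r_decomposition r W \<Y> \<Z>0 \<Z>1"
    unfolding r_decomposable_def by blast
  then have W: "W = \<Union>\<Z>0 \<union> \<Union>\<Z>1"
    and disj: "r_disjoint_family r \<Z>0" "r_disjoint_family r \<Z>1" and sub: "\<Z>0 \<subseteq> \<Y>" "\<Z>1 \<subseteq> \<Y>"
    unfolding r_decomposition_def by auto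
  define h where "h V = T \<inter> g ` V" for V
  have copies: "h ` \<Z> \<subseteq> isometric_subcopies \<Y>" if "\<Z> \<subseteq> \<Y>" "\<Union>\<Z> \<subseteq> W" for \<Z>
  proof
    fix P assume "P \<in> h ` \<Z>"
    then obtain V where "V \<in> \<Z>" "P = h V" by blast
    moreover have "dist_preserving_on g V"
      using \<open>V \<in> \<Z>\<close> that(2) dist_preserving_on_subset[OF g] by blast
    ultimately show "P \<in> isometric_subcopies \<Y>"
      using that(1) unfolding isometric_subcopies_def h_def by blast
  qed
  have separated: "r_disjoint_family r (h ` \<Z>)" if "r_disjoint_family r \<Z>" "\<Union>\<Z> \<subseteq> W" for \<Z>
    unfolding r_disjoint_family_def
  proof (intro ballI impI)
    fix P Q assume "P \<in> h ` \<Z>" "Q \<in> h ` \<Z>" "P \<noteq> Q"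
    then obtain V V' where V: "V \<in> \<Z>" "V' \<in> \<Z>" "P = h V" "Q = h V'" "V \<noteq> V'" by blast
    then have "r_disjoint r V V'" using that(1) unfolding r_disjoint_family_def by blast
    moreover have "V \<subseteq> W" "V' \<subseteq> W" using V(1,2) that(2) by blast+
    ultimately show "r_disjoint r P Q" using r_disjoint_image[OF _ g] V(3,4) by (simp add: h_def)
  qed
  have "T = \<Union>(h ` \<Z>0) \<union> \<Union>(h ` \<Z>1)" using T W unfolding h_def by blast
  then have "r_decomposition r T (isometric_subcopies \<Y>) (h ` \<Z>0) (h ` \<Z>1)"
    unfolding r_decomposition_def using W sub disj copies separated by simp
  then show "\<exists>\<Z>0 \<Z>1. r_decomposition r T (isometric_subcopies \<Y>) \<Z>0 \<Z>1" by blast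
qed

lemma uniformly_bounded_isometric_subcopies:
  assumes "uniformly_bounded \<X>"
  shows "uniformly_bounded (isometric_subcopies \<X>)"
proof -
  from assms obtain C where C: "\<forall>Z\<in>\<X>. \<forall>x\<in>Z. \<forall>y\<in>Z. dist x y \<le> C"
    unfolding uniformly_bounded_def by blast
  have "dist a b \<le> C" if "T \<in> isometric_subcopies \<X>" "a \<in> T" "b \<in> T" for T a b
  proof -
    from that obtain W g where W: "W \<in> \<X>" "dist_preserving_on g W" "a \<in> g ` W" "b \<in> g ` W"
      unfolding isometric_subcopies_def by blast
    then show ?thesis using C unfolding dist_preserving_on_def by auto
  qed
  then show ?thesis unfolding uniformly_bounded_def by blast
qed

lemma sFDC_isometric_subcopies:
  assumes "sFDC \<X>"
  shows "sFDC (isometric_subcopies \<X>)"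
  unfolding sFDC_def
proof (intro allI impI)
  fix R :: "nat \<Rightarrow> real" assume "(\<forall>i. 0 < R i) \<and> strict_mono R"
  with assms obtain n Xs where "Xs 0 = \<X>" "\<forall>i<n. r_decomposable (R i) (Xs i) (Xs (Suc i))"
    "uniformly_bounded (Xs n)" unfolding sFDC_def by blast
  then show "\<exists>n Xs. Xs 0 = isometric_subcopies \<X> \<and>
      (\<forall>i<n. r_decomposable (R i) (Xs i) (Xs (Suc i))) \<and> uniformly_bounded (Xs n)"
    by (intro exI[of _ n] exI[of _ "isometric_subcopies \<circ> Xs"])
       (simp add: r_decomposable_isometric_subcopies uniformly_bounded_isometric_subcopies)
qed

lemma sFDC_by_stages:
  assumes stage: "\<And>R. (\<forall>i. 0 < R i) \<and> strict_mono R \<Longrightarrow>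
    \<exists>m Xs. Xs 0 = \<X> \<and> (\<forall>i<m. r_decomposable (R i) (Xs i) (Xs (Suc i))) \<and> sFDC (Xs m)"
  shows "sFDC \<X>"
  unfolding sFDC_def
proof (intro allI impI)
  fix R :: "nat \<Rightarrow> real" assume R: "(\<forall>i. 0 < R i) \<and> strict_mono R"
  from stage[OF R] obtain m Xs where Xs: "Xs 0 = \<X>"
    "\<forall>i<m. r_decomposable (R i) (Xs i) (Xs (Suc i))" "sFDC (Xs m)" by blast
  have "(\<forall>j. 0 < R (m + j)) \<and> strict_mono (\<lambda>j. R (m + j))"
    using R unfolding strict_mono_def by auto
  from Xs(3)[unfolded sFDC_def, rule_format, OF this] obtain k Ys where Ys: "Ys 0 = Xs m"
    "\<forall>j<k. r_decomposable (R (m + j)) (Ys j) (Ys (Suc j))" "uniformly_bounded (Ys k)"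
    by blast
  define Zs where "Zs i = (if i \<le> m then Xs i else Ys (i - m))" for i
  have Zs_ge: "Zs i = Ys (i - m)" if "m \<le> i" for i
    using that Ys(1) unfolding Zs_def by (cases "i = m") auto
  have "r_decomposable (R i) (Zs i) (Zs (Suc i))" if "i < m + k" for i
  proof (cases "i < m")
    case True
    then show ?thesis using Xs(2) by (simp add: Zs_def)
  next
    case False
    then have "i - m < k" "m + (i - m) = i" using that by auto
    with Ys(2) have "r_decomposable (R i) (Ys (i - m)) (Ys (Suc (i - m)))" by metis
    moreover have "Suc (i - m) = Suc i - m" using False by simp
    ultimately show ?thesis using Zs_ge False by simp
  qed
  moreover have "uniformly_bounded (Zs (m + k))" using Zs_ge[of "m + k"] Ys(3) by simp
  moreover have "Zs 0 = \<X>" using Xs(1) by (simp add: Zs_def)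
  ultimately show "\<exists>n Zs. Zs 0 = \<X> \<and> (\<forall>i<n. r_decomposable (R i) (Zs i) (Zs (Suc i))) \<and>
      uniformly_bounded (Zs n)"
    by (intro exI[of _ "m + k"] exI[of _ Zs]) simp
qed

lemma r_decomposable_preimage_family:
  assumes dec: "r_decomposable S \<X> \<Y>" and "R < R'"
    and control: "\<forall>x\<in>E. \<forall>x'\<in>E. dist x x' < R' \<longrightarrow> dist (f x) (f x') \<le> S"
  shows "r_decomposable R (preimage_family f E \<X>) (preimage_family f E \<Y>)"
  unfolding r_decomposable_def
proof
  define pre where "pre U = {x\<in>E. f x \<in> U}" for U
  fix T assume "T \<in> preimage_family f E \<X>"
  then obtain U where "U \<in> \<X>" and T: "T = pre U" unfolding preimage_family_def pre_def by blast
  with dec obtain \<Z>0 \<Z>1 where "r_decomposition S U \<Y> \<Z>0 \<Z>1"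
    unfolding r_decomposable_def by blast
  then have U: "U = \<Union>\<Z>0 \<union> \<Union>\<Z>1"
    and disj: "r_disjoint_family S \<Z>0" "r_disjoint_family S \<Z>1" and sub: "\<Z>0 \<subseteq> \<Y>" "\<Z>1 \<subseteq> \<Y>"
    unfolding r_decomposition_def by auto
  have pre_disjoint: "r_disjoint R (pre V) (pre V')" if "r_disjoint S V V'" for V V'
  proof -
    from that obtain s where "s > S" and s: "\<forall>y\<in>V. \<forall>y'\<in>V'. s \<le> dist y y'"
      unfolding r_disjoint_def by blast
    have "R' \<le> dist x x'" if "x \<in> pre V" "x' \<in> pre V'" for x x'
    proof (rule ccontr)
      assume "\<not> R' \<le> dist x x'"
      with that control have "dist (f x) (f x') \<le> S" by (simp add: pre_def)
      moreover have "s \<le> dist (f x) (f x')" using that s by (simp add: pre_def)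
      ultimately show False using \<open>s > S\<close> by simp
    qed
    with \<open>R < R'\<close> show ?thesis unfolding r_disjoint_def by blast
  qed
  have separated: "r_disjoint_family R (pre ` \<Z>)" if "r_disjoint_family S \<Z>" for \<Z>
    unfolding r_disjoint_family_def
  proof (intro ballI impI)
    fix P Q assume "P \<in> pre ` \<Z>" "Q \<in> pre ` \<Z>" "P \<noteq> Q"
    then obtain V V' where "V \<in> \<Z>" "V' \<in> \<Z>" "P = pre V" "Q = pre V'" "V \<noteq> V'" by blast
    with that pre_disjoint show "r_disjoint R P Q" unfolding r_disjoint_family_def by simp
  qed
  have "T = \<Union>(pre ` \<Z>0) \<union> \<Union>(pre ` \<Z>1)" using T U unfolding pre_def by blast
  then have "r_decomposition R T (pre ` \<Y>) (pre ` \<Z>0) (pre ` \<Z>1)"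
    unfolding r_decomposition_def using sub disj separated by auto
  then show "\<exists>\<Z>0 \<Z>1. r_decomposition R T (preimage_family f E \<Y>) \<Z>0 \<Z>1"
    unfolding preimage_family_def pre_def by blast
qed

lemma sFDC_fibering:
  fixes f :: "'a::metric_space \<Rightarrow> 'b::metric_space"
  assumes maps: "f ` E \<subseteq> B" and ue: "uniformly_expansive f E" and base: "sFDC {B}"
    and fibres: "\<And>\<U>. uniformly_bounded \<U> \<Longrightarrow> sFDC (preimage_family f E \<U>)"
  shows "sFDC {E}"
proof (rule sFDC_by_stages)
  fix R :: "nat \<Rightarrow> real" assume R: "(\<forall>i. 0 < R i) \<and> strict_mono R"
  from ue obtain \<rho> :: "real \<Rightarrow> real" where \<rho>: "mono_on {0..} \<rho>" "\<forall>t\<ge>0. 0 \<le> \<rho> t"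
    "\<forall>x\<in>E. \<forall>x'\<in>E. dist (f x) (f x') \<le> \<rho> (dist x x')"
    unfolding uniformly_expansive_def by blast
  define S where "S i = \<rho> (R i + 1) + real i + 1" for i
  have "0 < S i" for i
  proof -
    have "0 < R i" using R by blast
    then have "0 \<le> \<rho> (R i + 1)" using \<rho>(2) by simp
    then show ?thesis unfolding S_def by simp
  qed
  moreover have "S i < S (Suc i)" for i
  proof -
    have "R i < R (Suc i)" "0 < R i" using R strict_monoD by blast+
    then have "\<rho> (R i + 1) \<le> \<rho> (R (Suc i) + 1)"
      by (intro mono_onD[OF \<rho>(1)]) auto
    then show ?thesis unfolding S_def by simp
  qed
  ultimately have "(\<forall>i. 0 < S i) \<and> strict_mono S" by (simp add: strict_mono_Suc_iff)
  from base[unfolded sFDC_def, rule_format, OF this] obtain m Bs where Bs: "Bs 0 = {B}"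
    "\<forall>i<m. r_decomposable (S i) (Bs i) (Bs (Suc i))" "uniformly_bounded (Bs m)"
    by blast
  have "r_decomposable (R i) (preimage_family f E (Bs i)) (preimage_family f E (Bs (Suc i)))"
    if "i < m" for i
  proof (rule r_decomposable_preimage_family)
    show "r_decomposable (S i) (Bs i) (Bs (Suc i))" using Bs(2) that by blast
    show "\<forall>x\<in>E. \<forall>x'\<in>E. dist x x' < R i + 1 \<longrightarrow> dist (f x) (f x') \<le> S i"
    proof (intro ballI impI)
      fix x x' assume "x \<in> E" "x' \<in> E" and close: "dist x x' < R i + 1"
      then have "dist (f x) (f x') \<le> \<rho> (dist x x')" using \<rho>(3) by blast
      also have "\<dots> \<le> \<rho> (R i + 1)"
        using close R[THEN conjunct1, rule_format, of i] by (intro mono_onD[OF \<rho>(1)]) auto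
      also have "\<dots> \<le> S i" unfolding S_def by simp
      finally show "dist (f x) (f x') \<le> S i" .
    qed
  qed simp
  moreover have "preimage_family f E {B} = {E}"
    using maps unfolding preimage_family_def by auto
  ultimately show "\<exists>m Xs. Xs 0 = {E} \<and> (\<forall>i<m. r_decomposable (R i) (Xs i) (Xs (Suc i))) \<and>
      sFDC (Xs m)"
    using Bs(1) fibres[OF Bs(3)]
    by (intro exI[of _ m] exI[of _ "preimage_family f E \<circ> Bs"]) simp
qed

lemma homogeneous_preimage_in_isometric_subcopies:
  fixes f :: "'a::metric_space \<Rightarrow> 'b::metric_space"
  assumes maps: "f ` E \<subseteq> B" and hom: "homogeneous f E B" and "x0 \<in> E"
    and diam: "\<forall>a\<in>U. \<forall>b\<in>U. dist a b \<le> C" and r: "dist b0 (f x0) + C < r"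
  shows "{x\<in>E. f x \<in> U} \<in> isometric_subcopies {{x\<in>E. f x \<in> ball b0 r}}"
proof (cases "{x\<in>E. f x \<in> U} = {}")
  case True
  then show ?thesis
    unfolding isometric_subcopies_def dist_preserving_on_def by (intro CollectI bexI exI[of _ id]) auto
next
  case False
  then obtain z0 where z0: "z0 \<in> E" "f z0 \<in> U" by blast
  then obtain \<phi> \<psi> where \<phi>: "self_isometry E \<phi>" and \<psi>: "self_isometry B \<psi>"
    and comm: "\<forall>x\<in>E. f (\<phi> x) = \<psi> (f x)" and "\<psi> (f x0) = f z0"
    using hom \<open>x0 \<in> E\<close> unfolding homogeneous_def by blast
  text \<open>\<open>\<phi>\<close> carries the fibre over \<open>f x0\<close> to the fibre over \<open>f z0 \<in> U\<close>, hence the preimage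
    of the \<open>C\<close>-ball about \<open>f x0\<close> onto a superset of the preimage of \<open>U\<close>.\<close>
  have "z \<in> \<phi> ` {x\<in>E. f x \<in> ball b0 r}" if "z \<in> E" "f z \<in> U" for z
  proof -
    from that \<phi> obtain x where x: "x \<in> E" "z = \<phi> x"
      unfolding self_isometry_def bij_betw_def by blast
    have "dist (f x0) (f x) = dist (\<psi> (f x0)) (\<psi> (f x))"
      using \<psi> maps x(1) \<open>x0 \<in> E\<close> unfolding self_isometry_def by (metis image_subset_iff)
    also have "\<dots> = dist (f z0) (f z)" using comm x \<open>\<psi> (f x0) = f z0\<close> by simp
    also have "\<dots> \<le> C" using diam z0 that by blast
    finally have "dist b0 (f x) < r" using r dist_triangle[of b0 "f x" "f x0"] by linarith
    with x show ?thesis by auto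
  qed
  moreover have "dist_preserving_on \<phi> {x\<in>E. f x \<in> ball b0 r}"
    using \<phi> unfolding dist_preserving_on_def self_isometry_def by auto
  ultimately show ?thesis unfolding isometric_subcopies_def by blast
qed

lemma sFDC_homogeneous_preimage_family:
  fixes f :: "'a::metric_space \<Rightarrow> 'b::metric_space"
  assumes maps: "f ` E \<subseteq> B" and hom: "homogeneous f E B"
    and balls: "\<forall>r>0. sFDC {{x\<in>E. f x \<in> ball b0 r}}" and "uniformly_bounded \<U>"
  shows "sFDC (preimage_family f E \<U>)"
proof (cases "E = {}")
  case True
  then show ?thesis
    unfolding preimage_family_def by (intro sFDC_subfamily[OF sFDC_empty]) auto
next
  case False
  then obtain x0 where "x0 \<in> E" by blast
  from \<open>uniformly_bounded \<U>\<close> obtain C where C: "\<forall>U\<in>\<U>. \<forall>a\<in>U. \<forall>b\<in>U. dist a b \<le> C"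
    unfolding uniformly_bounded_def by blast
  define r where "r = dist b0 (f x0) + \<bar>C\<bar> + 1"
  have "{x\<in>E. f x \<in> U} \<in> isometric_subcopies {{x\<in>E. f x \<in> ball b0 r}}" if "U \<in> \<U>" for U
    using C that
    by (intro homogeneous_preimage_in_isometric_subcopies[OF maps hom \<open>x0 \<in> E\<close>]) (auto simp: r_def)
  then have "preimage_family f E \<U> \<subseteq> isometric_subcopies {{x\<in>E. f x \<in> ball b0 r}}"
    unfolding preimage_family_def by blast
  moreover have "0 < r" unfolding r_def by (simp add: add_nonneg_pos)
  ultimately show ?thesis
    using balls sFDC_isometric_subcopies sFDC_subfamily by blast
qed

theorem theorem5p3:
  fixes f :: "'a::metric_space \<Rightarrow> 'b::metric_space" and E :: "'a set" and B :: "'b set"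
  assumes maps: "f ` E \<subseteq> B"
    and ue: "uniformly_expansive f E"
    and hom: "homogeneous f E B"
    and base: "sFDC_space B"
  shows "((\<exists>b0\<in>B. \<forall>r>0. sFDC_space {x\<in>E. f x \<in> ball b0 r}) \<longrightarrow> sFDC_space E) \<and>
         ((\<forall>D. D \<subseteq> B \<and> bounded D \<longrightarrow> sFDC_space {x\<in>E. f x \<in> D}) \<longrightarrow> sFDC_space E)"
proof (intro conjI impI)
  have fibering: "sFDC_space E" if "\<forall>r>0. sFDC_space {x\<in>E. f x \<in> ball b0 r}" for b0
    using sFDC_fibering[OF maps ue] sFDC_homogeneous_preimage_family[OF maps hom] that base
    unfolding sFDC_space_def by blast
  show "sFDC_space E" if "\<exists>b0\<in>B. \<forall>r>0. sFDC_space {x\<in>E. f x \<in> ball b0 r}"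
    using that fibering by blast
  show "sFDC_space E" if bounded: "\<forall>D. D \<subseteq> B \<and> bounded D \<longrightarrow> sFDC_space {x\<in>E. f x \<in> D}"
  proof (cases "E = {}")
    case True
    then show ?thesis using sFDC_empty unfolding sFDC_space_def by simp
  next
    case False
    then obtain x0 where "x0 \<in> E" by blast
    have "{x\<in>E. f x \<in> ball (f x0) r} = {x\<in>E. f x \<in> ball (f x0) r \<inter> B}" for r
      using maps by auto
    moreover have "sFDC_space {x\<in>E. f x \<in> ball (f x0) r \<inter> B}" for r
      using bounded bounded_Int bounded_ball by blast
    ultimately have "sFDC_space {x\<in>E. f x \<in> ball (f x0) r}" for r by simp
    then show ?thesis using fibering by blast
  qed
qed

end
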